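(* Let $G$ be a sub-$2$-permutable graph. Then $\chi_i(G\,\square\,K_2)=\Delta(G\,\square\,K_2)+1$.
   Context: All graphs are finite and simple. $K^-_{2n}$ is the complete graph on $2n$ vertices with a perfect matching removed. A homomorphism $f:G\to H$ is a map $V(G)\to V(H)$ with $f(u)f(v)\in E(H)$ whenever $uv\in E(G)$; it is locally injective if for every vertex $v$, $f$ is injective on $N(v)$. A graph $G$ (not necessarily regular) is sub-$2$-permutable if it admits a locally injective homomorphism to $K^-_{\Delta(G)+2}$ (in particular $\Delta(G)$ is even). An incidence of $G$ is a pair $(v,e)$ with $v\in e\in E(G)$; incidences $(v,e),(u,f)$ are adjacent if $v=u$, or $e=f$, or $vu\in\{e,f\}$; an incidence coloring gives adjacent incidences distinct colors; $\chi_i(G)$ is the least number of colors of an incidence coloring. $\Delta$ denotes maximum degree. $G\,\square\,H$ is the Cartesian product: vertex set $V(G)\times V(H)$, $(u,v)\sim(u',v')$ iff ($uu'\in E(G)$, $v=v'$) or ($u=u'$, $vv'\in E(H)$). *)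

theory Defs
  imports Main
begin

definition simple_graph :: "'a set \<Rightarrow> 'a set set \<Rightarrow> bool" where
  "simple_graph V E \<longleftrightarrow> finite V \<and>
     (\<forall>e\<in>E. \<exists>u v. e = {u, v} \<and> u \<noteq> v \<and> u \<in> V \<and> v \<in> V)"

definition neighbors :: "'a set set \<Rightarrow> 'a \<Rightarrow> 'a set" where
  "neighbors E v = {u. {u, v} \<in> E}"

definition degree :: "'a set set \<Rightarrow> 'a \<Rightarrow> nat" where
  "degree E v = card {e \<in> E. v \<in> e}"

definition max_degree :: "'a set \<Rightarrow> 'a set set \<Rightarrow> nat" where
  "max_degree V E = (if V = {} then 0 else Max (degree E ` V))"

text \<open>Complete graph on 2n vertices minus a perfect matching: vertices {0..<2n},
  i ~ j iff i, j are distinct and not matched (i div 2 \<noteq> j div 2).\<close>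
definition Kminus_V :: "nat \<Rightarrow> nat set" where
  "Kminus_V m = {0..<m}"

definition Kminus_E :: "nat \<Rightarrow> nat set set" where
  "Kminus_E m = {{i, j} | i j. i < m \<and> j < m \<and> i \<noteq> j \<and> i div 2 \<noteq> j div 2}"

definition loc_inj_hom :: "'a set \<Rightarrow> 'a set set \<Rightarrow> ('a \<Rightarrow> 'b) \<Rightarrow> 'b set \<Rightarrow> 'b set set \<Rightarrow> bool" where
  "loc_inj_hom V E f W F \<longleftrightarrow>
     (\<forall>v\<in>V. f v \<in> W) \<and>
     (\<forall>u\<in>V. \<forall>v\<in>V. {u, v} \<in> E \<longrightarrow> {f u, f v} \<in> F) \<and>
     (\<forall>v\<in>V. inj_on f (neighbors E v))"

definition sub_2_permutable :: "'a set \<Rightarrow> 'a set set \<Rightarrow> bool" where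
  "sub_2_permutable V E \<longleftrightarrow> even (max_degree V E) \<and>
     (\<exists>f :: 'a \<Rightarrow> nat. loc_inj_hom V E f
        (Kminus_V (max_degree V E + 2)) (Kminus_E (max_degree V E + 2)))"

definition incidences :: "'a set set \<Rightarrow> ('a \<times> 'a set) set" where
  "incidences E = {(v, e). e \<in> E \<and> v \<in> e}"

definition inc_adjacent :: "'a \<times> 'a set \<Rightarrow> 'a \<times> 'a set \<Rightarrow> bool" where
  "inc_adjacent a b = (case a of (v, e) \<Rightarrow> case b of (u, f) \<Rightarrow>
      v = u \<or> e = f \<or> {v, u} = e \<or> {v, u} = f)"

definition incidence_coloring :: "'a set set \<Rightarrow> nat \<Rightarrow> ('a \<times> 'a set \<Rightarrow> nat) \<Rightarrow> bool" where
  "incidence_coloring E k c \<longleftrightarrow>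
     (\<forall>a\<in>incidences E. c a < k) \<and>
     (\<forall>a\<in>incidences E. \<forall>b\<in>incidences E. a \<noteq> b \<and> inc_adjacent a b \<longrightarrow> c a \<noteq> c b)"

definition incidence_chromatic :: "'a set set \<Rightarrow> nat" where
  "incidence_chromatic E = (LEAST k. \<exists>c. incidence_coloring E k c)"

definition cart_V :: "'a set \<Rightarrow> 'b set \<Rightarrow> ('a \<times> 'b) set" where
  "cart_V V1 V2 = V1 \<times> V2"

definition cart_E :: "'a set \<Rightarrow> 'a set set \<Rightarrow> 'b set \<Rightarrow> 'b set set \<Rightarrow> ('a \<times> 'b) set set" where
  "cart_E V1 E1 V2 E2 =
     {{(u, w), (u', w)} | u u' w. {u, u'} \<in> E1 \<and> w \<in> V2} \<union>
     {{(u, w), (u, w')} | u w w'. u \<in> V1 \<and> {w, w'} \<in> E2}"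

definition K2_V :: "bool set" where "K2_V = UNIV"
definition K2_E :: "bool set set" where "K2_E = {{False, True}}"

end

theory Submission
  imports Defs
begin

text \<open>Colour each incidence \<open>(v, vu)\<close> by the colour of \<open>u\<close>. If vertices at distance at most two
  get distinct colours, this is an incidence colouring, so \<open>\<chi>\<^sub>i\<close> is at most the number of colours.
  Conversely every incidence colouring needs \<open>\<Delta> + 1\<close> colours: the \<open>\<Delta>\<close> incidences at a vertex \<open>w\<close>
  of maximum degree and one incidence \<open>(u, uw)\<close> are pairwise adjacent.
  In \<open>G \<box> K\<^sub>2\<close> the maximum degree is \<open>\<Delta>(G) + 1\<close>, and a locally injective homomorphism
  \<open>f : G \<rightarrow> K\<^sup>-\<^sub>\<Delta>\<^sub>+\<^sub>2\<close> gives such a colouring of \<open>G \<box> K\<^sub>2\<close> with \<open>\<Delta>(G) + 2\<close> colours: use \<open>f\<close> on one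
  copy of \<open>G\<close> and the matching partner of \<open>f\<close> on the other. A rung joins a colour to its partner,
  and since \<open>f\<close> maps adjacent vertices to unmatched colours, nothing clashes across the copies.\<close>

lemma simple_graph_edgeD:
  assumes "simple_graph V E" "{u, v} \<in> E"
  shows "u \<in> V" "v \<in> V" "u \<noteq> v"
  using assms unfolding simple_graph_def by (auto simp: doubleton_eq_iff)

lemma simple_graph_edgeE:
  assumes "simple_graph V E" "e \<in> E" "v \<in> e"
  obtains u where "e = {v, u}" "u \<noteq> v"
  using assms unfolding simple_graph_def by (metis empty_iff insert_commute insert_iff)

lemma simple_graph_incidenceE:
  assumes "simple_graph V E" "a \<in> incidences E"
  obtains v u where "a = (v, {v, u})" "{v, u} \<in> E" "u \<noteq> v"
proof -
  obtain v e where "a = (v, e)" "e \<in> E" "v \<in> e" using assms(2) by (auto simp: incidences_def)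
  moreover obtain u where "e = {v, u}" "u \<noteq> v"
    by (rule simple_graph_edgeE[OF assms(1) \<open>e \<in> E\<close> \<open>v \<in> e\<close>])
  ultimately show ?thesis using that by blast
qed

lemma simple_graph_finite_edges:
  assumes "simple_graph V E"
  shows "finite E"
proof -
  have "E \<subseteq> Pow V" using assms unfolding simple_graph_def by fastforce
  moreover have "finite V" using assms unfolding simple_graph_def by simp
  ultimately show ?thesis by (meson finite_Pow_iff finite_subset)
qed

lemma max_degree_attained:
  assumes "finite V" "V \<noteq> {}"
  obtains w where "w \<in> V" "degree E w = max_degree V E"
proof -
  have "Max (degree E ` V) \<in> degree E ` V" using assms by (intro Max_in) auto
  then obtain w where "Max (degree E ` V) = degree E w" "w \<in> V" by (rule imageE)
  then show ?thesis using that \<open>V \<noteq> {}\<close> by (simp add: max_degree_def)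
qed

subsection \<open>The lower bound \<open>\<chi>\<^sub>i \<ge> \<Delta> + 1\<close>\<close>

lemma incidence_coloring_degree_bound:
  assumes G: "simple_graph V E" and "degree E w \<ge> 1" and col: "incidence_coloring E k c"
  shows "degree E w + 1 \<le> k"
proof -
  define S where "S = {e \<in> E. w \<in> e}"
  define I where "I = (\<lambda>e. (w, e)) ` S"
  have "finite S" using simple_graph_finite_edges[OF G] by (simp add: S_def)
  moreover have "card S = degree E w" by (simp add: S_def degree_def)
  ultimately obtain e0 where "e0 \<in> S" using assms(2) by fastforce
  then have "e0 \<in> E" "w \<in> e0" by (auto simp: S_def)
  then obtain u where u: "e0 = {w, u}" "u \<noteq> w" by (rule simple_graph_edgeE[OF G])
  have I_inc: "I \<subseteq> incidences E" by (auto simp: I_def S_def incidences_def)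
  have u_inc: "(u, e0) \<in> incidences E" using \<open>e0 \<in> S\<close> u by (auto simp: S_def incidences_def)
  have distinct: "c a \<noteq> c b" if "a \<in> incidences E" "b \<in> incidences E" "a \<noteq> b" "inc_adjacent a b" for a b
    using col that unfolding incidence_coloring_def by blast
  have "inj_on c I"
  proof (rule inj_onI)
    fix a b assume "a \<in> I" "b \<in> I" "c a = c b"
    moreover have "inc_adjacent a b" using \<open>a \<in> I\<close> \<open>b \<in> I\<close> by (auto simp: I_def inc_adjacent_def)
    ultimately show "a = b" using I_inc distinct by blast
  qed
  then have "card (c ` I) = card S" by (simp add: I_def card_image inj_on_def)
  moreover have "c (u, e0) \<notin> c ` I"
  proof
    assume "c (u, e0) \<in> c ` I"
    then obtain e where "e \<in> S" "c (w, e) = c (u, e0)" by (auto simp: I_def)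
    moreover have "(w, e) \<in> incidences E" using \<open>e \<in> S\<close> I_inc by (auto simp: I_def)
    moreover have "inc_adjacent (w, e) (u, e0)" using u by (simp add: inc_adjacent_def)
    ultimately show False using distinct u_inc u by fastforce
  qed
  ultimately have "card (insert (c (u, e0)) (c ` I)) = card S + 1"
    using \<open>finite S\<close> by (simp add: I_def)
  moreover have "insert (c (u, e0)) (c ` I) \<subseteq> {..<k}"
    using col I_inc u_inc unfolding incidence_coloring_def by auto
  ultimately have "card S + 1 \<le> k" by (metis card_lessThan card_mono finite_lessThan)
  then show ?thesis by (simp add: S_def degree_def)
qed

lemma incidence_chromatic_eq_max_degree_plus_one:
  assumes G: "simple_graph V E" and "V \<noteq> {}" and "max_degree V E \<ge> 1"
    and col: "incidence_coloring E (max_degree V E + 1) c"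
  shows "incidence_chromatic E = max_degree V E + 1"
proof -
  obtain w where "w \<in> V" "degree E w = max_degree V E"
    using G \<open>V \<noteq> {}\<close> by (auto simp: simple_graph_def elim: max_degree_attained)
  then have "max_degree V E + 1 \<le> k" if "incidence_coloring E k c'" for k c'
    using incidence_coloring_degree_bound[OF G _ that, of w] assms(3) by simp
  then show ?thesis
    unfolding incidence_chromatic_def by (intro Least_equality) (use col in auto)
qed

subsection \<open>The upper bound from distance-2 colourings\<close>

text \<open>Equivalently, a locally injective homomorphism to the complete graph on \<open>{..<k}\<close>.\<close>
definition distance2_coloring :: "'a set \<Rightarrow> 'a set set \<Rightarrow> nat \<Rightarrow> ('a \<Rightarrow> nat) \<Rightarrow> bool" where
  "distance2_coloring V E k F \<longleftrightarrow>
     (\<forall>v\<in>V. F v < k) \<and> (\<forall>u v. {u, v} \<in> E \<longrightarrow> F u \<noteq> F v) \<and> (\<forall>v\<in>V. inj_on F (neighbors E v))"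

definition other_end :: "'a \<Rightarrow> 'a set \<Rightarrow> 'a" where
  "other_end v e = the_elem (e - {v})"

lemma other_end_doubleton [simp]: "u \<noteq> v \<Longrightarrow> other_end v {v, u} = u"
  unfolding other_end_def by (simp add: insert_Diff_if)

lemma incidence_coloring_of_distance2_coloring:
  assumes G: "simple_graph V E" and F: "distance2_coloring V E k F"
  shows "incidence_coloring E k (\<lambda>(v, e). F (other_end v e))"
  unfolding incidence_coloring_def
proof (intro conjI ballI impI)
  fix a assume "a \<in> incidences E"
  then obtain v u where "a = (v, {v, u})" "{v, u} \<in> E" "u \<noteq> v"
    by (rule simple_graph_incidenceE[OF G])
  then show "(case a of (v, e) \<Rightarrow> F (other_end v e)) < k"
    using F simple_graph_edgeD[OF G] by (auto simp: distance2_coloring_def)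
next
  fix a b assume "a \<in> incidences E" "b \<in> incidences E" and ab: "a \<noteq> b \<and> inc_adjacent a b"
  obtain v x where a: "a = (v, {v, x})" "{v, x} \<in> E" "x \<noteq> v"
    using \<open>a \<in> incidences E\<close> by (rule simple_graph_incidenceE[OF G])
  obtain u y where b: "b = (u, {u, y})" "{u, y} \<in> E" "y \<noteq> u"
    using \<open>b \<in> incidences E\<close> by (rule simple_graph_incidenceE[OF G])
  have proper: "F p \<noteq> F q" if "{p, q} \<in> E" for p q
    using F that by (auto simp: distance2_coloring_def)
  have "F x \<noteq> F y"
  proof (cases "v = u")
    case True
    then have "x \<noteq> y" "x \<in> neighbors E v" "y \<in> neighbors E v" "v \<in> V"
      using ab a b simple_graph_edgeD[OF G] by (auto simp: neighbors_def insert_commute)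
    then show ?thesis using F by (auto simp: distance2_coloring_def dest: inj_onD)
  next
    case False
    then have "(v = y \<and> x = u) \<or> u = x \<or> y = v"
      using ab a b by (auto simp: inc_adjacent_def doubleton_eq_iff)
    then show ?thesis using proper a b by (metis insert_commute)
  qed
  then show "(case a of (v, e) \<Rightarrow> F (other_end v e)) \<noteq> (case b of (v, e) \<Rightarrow> F (other_end v e))"
    using a b by simp
qed

subsection \<open>The prism \<open>G \<box> K\<^sub>2\<close>\<close>

lemma cart_K2_edge_cases:
  assumes "e \<in> cart_E V E K2_V K2_E"
  obtains (layer) u u' b where "e = {(u, b), (u', b)}" "{u, u'} \<in> E"
    | (rung) u where "e = {(u, False), (u, True)}" "u \<in> V"
  using assms by (auto simp: cart_E_def K2_E_def doubleton_eq_iff)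

lemma cart_K2_layer_edge: "{u, u'} \<in> E \<Longrightarrow> {(u, b), (u', b)} \<in> cart_E V E K2_V K2_E"
  unfolding cart_E_def K2_V_def by (intro UnI1 CollectI exI[of _ u] exI[of _ u'] exI[of _ b]) simp

lemma cart_K2_rung_edge: "u \<in> V \<Longrightarrow> {(u, False), (u, True)} \<in> cart_E V E K2_V K2_E"
  unfolding cart_E_def K2_E_def by (intro UnI2 CollectI exI[of _ u] exI[of _ False] exI[of _ True]) simp

lemma simple_graph_cart_K2:
  assumes G: "simple_graph V E"
  shows "simple_graph (cart_V V K2_V) (cart_E V E K2_V K2_E)"
  unfolding simple_graph_def
proof (intro conjI ballI)
  show "finite (cart_V V K2_V)" using G by (simp add: simple_graph_def cart_V_def K2_V_def)
next
  fix e assume "e \<in> cart_E V E K2_V K2_E"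
  then show "\<exists>p q. e = {p, q} \<and> p \<noteq> q \<and> p \<in> cart_V V K2_V \<and> q \<in> cart_V V K2_V"
  proof (cases rule: cart_K2_edge_cases)
    case (layer u u' b)
    then show ?thesis
      using simple_graph_edgeD[OF G layer(2)]
      by (intro exI[of _ "(u, b)"] exI[of _ "(u', b)"]) (simp add: cart_V_def K2_V_def)
  next
    case (rung u)
    then show ?thesis
      by (intro exI[of _ "(u, False)"] exI[of _ "(u, True)"]) (simp add: cart_V_def K2_V_def)
  qed
qed

lemma neighbors_cart_K2:
  assumes G: "simple_graph V E" and "y \<in> neighbors (cart_E V E K2_V K2_E) (v, b)"
  shows "(\<exists>u. y = (u, b) \<and> {u, v} \<in> E) \<or> (y = (v, \<not> b) \<and> v \<in> V)"
proof -
  have "{y, (v, b)} \<in> cart_E V E K2_V K2_E" using assms(2) by (simp add: neighbors_def)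
  then show ?thesis
  proof (cases rule: cart_K2_edge_cases)
    case (layer u u' b')
    then have "(y = (u, b) \<and> v = u') \<or> (y = (u', b) \<and> v = u)"
      by (auto simp: doubleton_eq_iff)
    then show ?thesis using layer(2) by (auto simp: insert_commute)
  qed (auto simp: doubleton_eq_iff)
qed

lemma edges_at_cart_K2:
  assumes G: "simple_graph V E" and "v \<in> V"
  shows "{e \<in> cart_E V E K2_V K2_E. (v, b) \<in> e} =
    insert {(v, False), (v, True)} ((\<lambda>e. (\<lambda>x. (x, b)) ` e) ` {e \<in> E. v \<in> e})"
    (is "?L = insert ?r (?g ` ?S)")
proof
  show "?L \<subseteq> insert ?r (?g ` ?S)"
  proof
    fix e assume "e \<in> ?L"
    then have "e \<in> cart_E V E K2_V K2_E" "(v, b) \<in> e" by auto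
    then show "e \<in> insert ?r (?g ` ?S)"
    proof (cases rule: cart_K2_edge_cases)
      case (layer u u' b')
      with \<open>(v, b) \<in> e\<close> have "e = ?g {u, u'}" "{u, u'} \<in> ?S" by auto
      then show ?thesis by (intro insertI2 image_eqI)
    qed (use \<open>(v, b) \<in> e\<close> in auto)
  qed
  show "insert ?r (?g ` ?S) \<subseteq> ?L"
  proof
    fix e assume "e \<in> insert ?r (?g ` ?S)"
    then consider "e = ?r" | e' where "e' \<in> E" "v \<in> e'" "e = ?g e'" by auto
    then show "e \<in> ?L"
    proof cases
      case 1
      then show ?thesis using cart_K2_rung_edge[OF \<open>v \<in> V\<close>] by simp
    next
      case (2 e')
      obtain u where "e' = {v, u}" by (rule simple_graph_edgeE[OF G 2(1,2)])
      then show ?thesis using 2 cart_K2_layer_edge[of v u E b V] by auto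
    qed
  qed
qed

lemma degree_cart_K2:
  assumes G: "simple_graph V E" and "v \<in> V"
  shows "degree (cart_E V E K2_V K2_E) (v, b) = degree E v + 1"
proof -
  let ?g = "\<lambda>e. (\<lambda>x. (x, b)) ` e"
  have "inj_on ?g {e \<in> E. v \<in> e}" by (rule inj_onI) auto
  moreover have "{(v, False), (v, True)} \<notin> ?g ` {e \<in> E. v \<in> e}" by auto
  moreover have "finite {e \<in> E. v \<in> e}" using simple_graph_finite_edges[OF G] by simp
  ultimately show ?thesis
    unfolding degree_def edges_at_cart_K2[OF assms] by (simp add: card_image)
qed

lemma max_degree_cart_K2:
  assumes G: "simple_graph V E" and "V \<noteq> {}"
  shows "max_degree (cart_V V K2_V) (cart_E V E K2_V K2_E) = max_degree V E + 1"
proof -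
  have "degree (cart_E V E K2_V K2_E) ` cart_V V K2_V = (\<lambda>v. degree E v + 1) ` V"
  proof
    show "degree (cart_E V E K2_V K2_E) ` cart_V V K2_V \<subseteq> (\<lambda>v. degree E v + 1) ` V"
      by (auto simp: cart_V_def degree_cart_K2[OF G])
    show "(\<lambda>v. degree E v + 1) ` V \<subseteq> degree (cart_E V E K2_V K2_E) ` cart_V V K2_V"
    proof
      fix n assume "n \<in> (\<lambda>v. degree E v + 1) ` V"
      then obtain v where "v \<in> V" "n = degree (cart_E V E K2_V K2_E) (v, True)"
        using degree_cart_K2[OF G] by auto
      then show "n \<in> degree (cart_E V E K2_V K2_E) ` cart_V V K2_V"
        by (simp add: cart_V_def K2_V_def)
    qed
  qed
  moreover have "Max ((\<lambda>v. degree E v + 1) ` V) = Max (degree E ` V) + 1"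
    using G \<open>V \<noteq> {}\<close> mono_Max_commute[of "\<lambda>n. n + 1" "degree E ` V"]
    by (simp add: simple_graph_def mono_def image_image)
  ultimately show ?thesis
    using \<open>V \<noteq> {}\<close> by (simp add: max_degree_def cart_V_def K2_V_def)
qed

subsection \<open>Lifting a locally injective homomorphism to \<open>K\<^sup>-\<^sub>m\<close>\<close>

definition partner :: "nat \<Rightarrow> nat" where
  "partner i = (if even i then i + 1 else i - 1)"

lemma partner_div_2 [simp]: "partner i div 2 = i div 2"
  unfolding partner_def by (cases "even i") (auto elim: evenE oddE)

lemma partner_neq: "partner i \<noteq> i"
  unfolding partner_def by presburger

lemma partner_eq_iff [simp]: "partner i = partner j \<longleftrightarrow> i = j"
  unfolding partner_def by (auto split: if_splits) presburger+

lemma partner_less: "even m \<Longrightarrow> i < m \<Longrightarrow> partner i < m"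
  unfolding partner_def by (auto elim!: evenE)

lemma loc_inj_hom_KminusD:
  assumes G: "simple_graph V E" and f: "loc_inj_hom V E f (Kminus_V m) (Kminus_E m)"
  shows "v \<in> V \<Longrightarrow> f v < m"
    and "{u, v} \<in> E \<Longrightarrow> f u div 2 \<noteq> f v div 2"
    and "v \<in> V \<Longrightarrow> inj_on f (neighbors E v)"
proof -
  show "v \<in> V \<Longrightarrow> f v < m" "v \<in> V \<Longrightarrow> inj_on f (neighbors E v)"
    using f by (auto simp: loc_inj_hom_def Kminus_V_def)
  assume "{u, v} \<in> E"
  then have "{f u, f v} \<in> Kminus_E m"
    using f simple_graph_edgeD[OF G] by (auto simp: loc_inj_hom_def)
  then show "f u div 2 \<noteq> f v div 2" by (auto simp: Kminus_E_def doubleton_eq_iff)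
qed

lemma distance2_coloring_cart_K2:
  assumes G: "simple_graph V E" and f: "loc_inj_hom V E f (Kminus_V m) (Kminus_E m)"
    and "even m"
  shows "distance2_coloring (cart_V V K2_V) (cart_E V E K2_V K2_E) m
           (\<lambda>(u, b). if b then f u else partner (f u))"
    (is "distance2_coloring ?V ?E m ?F")
proof -
  note f_less = loc_inj_hom_KminusD(1)[OF G f]
    and f_unmatched = loc_inj_hom_KminusD(2)[OF G f]
    and f_inj = loc_inj_hom_KminusD(3)[OF G f]
  have layer_proper: "?F (u, b) \<noteq> ?F (v, b')" if "{u, v} \<in> E" for u v b b'
    using f_unmatched[OF that] by (cases b; cases b') (auto dest: arg_cong[where f = "\<lambda>i. i div 2"])
  have proper: "?F p \<noteq> ?F q" if "{p, q} \<in> ?E" for p q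
    using that
  proof (cases rule: cart_K2_edge_cases)
    case (layer u u' b)
    then show ?thesis using layer_proper[OF layer(2), of b b] by (auto simp: doubleton_eq_iff)
  next
    case (rung u)
    have "?F (u, False) \<noteq> ?F (u, True)" using partner_neq[of "f u"] by simp
    with rung show ?thesis by (auto simp: doubleton_eq_iff)
  qed
  have inj: "inj_on ?F (neighbors ?E (v, b))" for v b
  proof (rule inj_onI)
    fix y1 y2 assume "y1 \<in> neighbors ?E (v, b)" "y2 \<in> neighbors ?E (v, b)" and eq: "?F y1 = ?F y2"
    from this(1,2)[THEN neighbors_cart_K2[OF G]] show "y1 = y2"
    proof (elim disjE exE conjE)
      fix u1 u2 assume "y1 = (u1, b)" "{u1, v} \<in> E" "y2 = (u2, b)" "{u2, v} \<in> E"
      moreover from this have "u1 \<in> neighbors E v" "u2 \<in> neighbors E v" "v \<in> V"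
        using simple_graph_edgeD[OF G] by (auto simp: neighbors_def)
      ultimately show ?thesis using eq f_inj by (cases b) (auto dest: inj_onD)
    next
      fix u1 assume "y1 = (u1, b)" "{u1, v} \<in> E" "y2 = (v, \<not> b)"
      then show ?thesis using eq layer_proper[of u1 v b "\<not> b"] by auto
    next
      fix u2 assume "y1 = (v, \<not> b)" "y2 = (u2, b)" "{u2, v} \<in> E"
      then show ?thesis using eq layer_proper[of u2 v b "\<not> b"] by auto
    next
      assume "y1 = (v, \<not> b)" "y2 = (v, \<not> b)"
      then show ?thesis by simp
    qed
  qed
  show ?thesis
    unfolding distance2_coloring_def
    using proper inj f_less partner_less[OF \<open>even m\<close>] by (auto simp: cart_V_def)
qed

theorem mainTheorem9:
  fixes V :: "'a set" and E :: "'a set set"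
  assumes "simple_graph V E" and "V \<noteq> {}" and "sub_2_permutable V E"
  shows "incidence_chromatic (cart_E V E K2_V K2_E) =
           max_degree (cart_V V K2_V) (cart_E V E K2_V K2_E) + 1"
proof -
  let ?V' = "cart_V V K2_V" and ?E' = "cart_E V E K2_V K2_E"
  obtain f where f: "loc_inj_hom V E f (Kminus_V (max_degree V E + 2)) (Kminus_E (max_degree V E + 2))"
    and "even (max_degree V E)"
    using assms(3) by (auto simp: sub_2_permutable_def)
  have G': "simple_graph ?V' ?E'" by (rule simple_graph_cart_K2[OF assms(1)])
  have \<Delta>': "max_degree ?V' ?E' = max_degree V E + 1"
    by (rule max_degree_cart_K2[OF assms(1,2)])
  have "distance2_coloring ?V' ?E' (max_degree V E + 2) (\<lambda>(u, b). if b then f u else partner (f u))"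
    using distance2_coloring_cart_K2[OF assms(1) f] \<open>even (max_degree V E)\<close> by simp
  then have "incidence_coloring ?E' (max_degree ?V' ?E' + 1)
      (\<lambda>(v, e). (\<lambda>(u, b). if b then f u else partner (f u)) (other_end v e))"
    unfolding \<Delta>' by (auto dest: incidence_coloring_of_distance2_coloring[OF G'])
  moreover have "?V' \<noteq> {}" using assms(2) by (simp add: cart_V_def K2_V_def)
  ultimately show ?thesis
    using incidence_chromatic_eq_max_degree_plus_one[OF G'] \<Delta>' by simp
qed

end
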